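(* For every BIMS channel with capacity $C$ and every $\rho>-1$, $$-\log F^{\rm bsc}(\rho;C)\le E_0(\rho)\le -\log F^{\rm bec}(\rho;C).$$ In particular, the cutoff rate $R_0=E_0(1)$ satisfies $$-\log\Bigl(\tfrac12\bigl(\sqrt{\varepsilon}+\sqrt{1-\varepsilon}\bigr)^2\Bigr)\le R_0\le -\log\frac{1+(1-C)}{2},\qquad \varepsilon=h^{-1}(1-C),$$ with equality on the left for the BSC and on the right for the BEC.
   Context: A BIMS (binary-input memoryless symmetric) channel is a memoryless channel with input alphabet $\{x_0,x_1\}$, finite output alphabet $\mathcal Y$ and transition probabilities $P_{Y|X}(y|x)$. It is symmetric in Gallager's sense: the columns of the $2\times|\mathcal Y|$ transition matrix (rows indexed by inputs) can be partitioned into submatrices such that, in each submatrix, every row is a permutation of every other row and every column is a permutation of every other column. Inputs are equiprobable and logarithms are base 2. The capacity $C$ is $I(X;Y)$ under equiprobable inputs. For $\rho>-1$, $$F(\rho)=\sum_{x}\tfrac12\sum_{y:\,P_{Y|X}(y|x)>0}P_{Y|X}(y|x)\left(\frac{\tfrac12\sum_{x'}P_{Y|X}(y|x')^{1/(1+\rho)}}{P_{Y|X}(y|x)^{1/(1+\rho)}}\right)^{\rho},$$ and $E_0(\rho)=-\log F(\rho)$. $h$ is the binary entropy function and $h^{-1}$ its inverse on $[0,\tfrac12]$. Define $$F^{\rm bec}(\rho;C)=1+(2^{-\rho}-1)C,$$ $$F^{\rm bsc}(\rho;C)=2^{-\rho}\bigl(\varepsilon^{1/(1+\rho)}+(1-\varepsilon)^{1/(1+\rho)}\bigr)^{1+\rho},\qquad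 \varepsilon=h^{-1}(1-C).$$ *)

theory Defs
  imports "HOL-Analysis.Analysis" "HOL-Library.Disjoint_Sets"
begin

(* Binary input alphabet {x0,x1} is modelled by bool; W x y = P_{Y|X}(y|x);
   the finite output alphabet is the finite set Y. *)

definition gallager_symmetric :: "(bool \<Rightarrow> 'y \<Rightarrow> real) \<Rightarrow> 'y set \<Rightarrow> bool" where
  "gallager_symmetric W Y \<longleftrightarrow>
     (\<exists>P. partition_on Y P \<and>
       (\<forall>B\<in>P.
          (\<comment> \<open>every row of the submatrix is a permutation of every other row\<close>
           \<forall>x x'. \<exists>\<sigma>. bij_betw \<sigma> B B \<and> (\<forall>y\<in>B. W x' (\<sigma> y) = W x y)) \<and>
          (\<comment> \<open>every column of the submatrix is a permutation of every other column\<close>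
           \<forall>y\<in>B. \<forall>y'\<in>B. \<exists>\<tau>::bool \<Rightarrow> bool. bij \<tau> \<and> (\<forall>x. W (\<tau> x) y' = W x y))))"

definition bims :: "(bool \<Rightarrow> 'y \<Rightarrow> real) \<Rightarrow> 'y set \<Rightarrow> bool" where
  "bims W Y \<longleftrightarrow> finite Y \<and> Y \<noteq> {} \<and>
     (\<forall>x. \<forall>y\<in>Y. W x y \<ge> 0) \<and> (\<forall>x. (\<Sum>y\<in>Y. W x y) = 1) \<and>
     gallager_symmetric W Y"

definition out_prob :: "(bool \<Rightarrow> 'y \<Rightarrow> real) \<Rightarrow> 'y \<Rightarrow> real" where
  "out_prob W y = (1/2) * (\<Sum>x'\<in>UNIV. W x' y)"

(* capacity C = I(X;Y) with equiprobable inputs, logs base 2 *)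
definition capacity :: "(bool \<Rightarrow> 'y \<Rightarrow> real) \<Rightarrow> 'y set \<Rightarrow> real" where
  "capacity W Y = (\<Sum>x\<in>UNIV. (1/2) * (\<Sum>y\<in>{y\<in>Y. W x y > 0}.
       W x y * log 2 (W x y / out_prob W y)))"

definition Ffun :: "(bool \<Rightarrow> 'y \<Rightarrow> real) \<Rightarrow> 'y set \<Rightarrow> real \<Rightarrow> real" where
  "Ffun W Y \<rho> = (\<Sum>x\<in>UNIV. (1/2) * (\<Sum>y\<in>{y\<in>Y. W x y > 0}.
       W x y * (((1/2) * (\<Sum>x'\<in>UNIV. W x' y powr (1/(1+\<rho>)))) / W x y powr (1/(1+\<rho>))) powr \<rho>))"

definition E0 :: "(bool \<Rightarrow> 'y \<Rightarrow> real) \<Rightarrow> 'y set \<Rightarrow> real \<Rightarrow> real" where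
  "E0 W Y \<rho> = - log 2 (Ffun W Y \<rho>)"

definition bin_entropy :: "real \<Rightarrow> real" where
  "bin_entropy p = (if p = 0 \<or> p = 1 then 0 else - p * log 2 p - (1 - p) * log 2 (1 - p))"

definition bin_entropy_inv :: "real \<Rightarrow> real" where
  "bin_entropy_inv c = (THE e. 0 \<le> e \<and> e \<le> 1/2 \<and> bin_entropy e = c)"

definition F_bec :: "real \<Rightarrow> real \<Rightarrow> real" where
  "F_bec \<rho> C = 1 + (2 powr (-\<rho>) - 1) * C"

definition F_bsc :: "real \<Rightarrow> real \<Rightarrow> real" where
  "F_bsc \<rho> C = (let \<epsilon> = bin_entropy_inv (1 - C) in
     2 powr (-\<rho>) * (\<epsilon> powr (1/(1+\<rho>)) + (1 - \<epsilon>) powr (1/(1+\<rho>))) powr (1+\<rho>))"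

definition bsc :: "real \<Rightarrow> bool \<Rightarrow> bool \<Rightarrow> real" where
  "bsc p x y = (if x = y then 1 - p else p)"

(* binary erasure channel with erasure probability e; None is the erasure symbol *)
definition bec :: "real \<Rightarrow> bool \<Rightarrow> bool option \<Rightarrow> real" where
  "bec e x y = (case y of None \<Rightarrow> e | Some b \<Rightarrow> (if b = x then 1 - e else 0))"

end

theory Submission
  imports Defs "HOL-Real_Asymp.Real_Asymp"
begin

text \<open>Sort the outputs by the posterior \<open>q(y) = W(1|y) / (W(0|y) + W(1|y))\<close>. With the
  output probabilities \<open>P(y)\<close> as weights, \<open>F(\<rho>) = \<Sum> P(y) f(q(y))\<close> and
  \<open>1 - C = \<Sum> P(y) h(q(y))\<close>, where \<open>f(p)\<close> is \<open>F(\<rho>)\<close> of the BSC with crossover \<open>p\<close>.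
  On \<open>[0, 1/2]\<close> the ratio \<open>f'/h'\<close> decreases, so \<open>f\<close> is a concave function of \<open>h\<close>:
  it lies above its chord between \<open>p = 0\<close> and \<open>p = 1/2\<close>, which averages to the BEC bound,
  and below its tangent at \<open>h\<inverse>(1 - C)\<close>, which averages to the BSC bound (Jensen).
  In the log-likelihood coordinate \<open>y = ln ((1 - p) / p)\<close> the monotonicity of \<open>f'/h'\<close>
  reduces to an elementary inequality between exponentials.\<close>

section \<open>Concavity with respect to a reparametrisation\<close>

text \<open>\<open>f\<close> is a concave function of the increasing function \<open>g\<close>, i.e. \<open>f \<circ> g\<inverse>\<close> is
  concave; this is expressed through the antitone derivative ratio \<open>f'/g'\<close>, which needs
  differentiability only in the interior.\<close>
locale concave_wrt =
  fixes a b :: real and f g f' g' :: "real \<Rightarrow> real"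
  assumes less: "a < b"
    and continuous_f: "continuous_on {a..b} f"
    and continuous_g: "continuous_on {a..b} g"
    and deriv_f: "\<And>x. a < x \<Longrightarrow> x < b \<Longrightarrow> (f has_real_derivative f' x) (at x)"
    and deriv_g: "\<And>x. a < x \<Longrightarrow> x < b \<Longrightarrow> (g has_real_derivative g' x) (at x)"
    and deriv_g_pos: "\<And>x. a < x \<Longrightarrow> x < b \<Longrightarrow> 0 < g' x"
    and ratio_antimono: "\<And>x y. a < x \<Longrightarrow> x \<le> y \<Longrightarrow> y < b \<Longrightarrow> f' y / g' y \<le> f' x / g' x"
begin

lemma deriv_shifted:
  assumes "a < x" "x < b"
  shows "((\<lambda>t. f t - \<mu> * g t) has_real_derivative g' x * (f' x / g' x - \<mu>)) (at x)"
proof -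
  have "f' x - \<mu> * g' x = g' x * (f' x / g' x - \<mu>)"
    using deriv_g_pos[OF assms] by (simp add: field_simps)
  thus ?thesis
    using DERIV_diff[OF deriv_f[OF assms] DERIV_cmult[OF deriv_g[OF assms], of \<mu>]] by simp
qed

lemma continuous_shifted:
  assumes "a \<le> c" "d \<le> b"
  shows "continuous_on {c..d} (\<lambda>t. f t - \<mu> * g t)"
proof -
  have sub: "{c..d} \<subseteq> {a..b}" using assms by auto
  show ?thesis
    by (intro continuous_intros continuous_on_subset[OF continuous_f sub]
          continuous_on_subset[OF continuous_g sub])
qed

lemma shifted_mono:
  assumes "a \<le> c" "c \<le> d" "d \<le> b" and ge: "\<And>t. c < t \<Longrightarrow> t < d \<Longrightarrow> \<mu> \<le> f' t / g' t"
  shows "f c - \<mu> * g c \<le> f d - \<mu> * g d"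
proof (rule DERIV_nonneg_imp_increasing_open[OF \<open>c \<le> d\<close> _ continuous_shifted[OF assms(1,3)]])
  fix t assume t: "c < t" "t < d"
  hence "a < t" "t < b" using assms by auto
  thus "\<exists>y. ((\<lambda>t. f t - \<mu> * g t) has_real_derivative y) (at t) \<and> 0 \<le> y"
    using deriv_shifted deriv_g_pos[of t] ge[OF t] by (intro exI conjI) auto
qed

lemma shifted_antimono:
  assumes "a \<le> c" "c \<le> d" "d \<le> b" and le: "\<And>t. c < t \<Longrightarrow> t < d \<Longrightarrow> f' t / g' t \<le> \<mu>"
  shows "f d - \<mu> * g d \<le> f c - \<mu> * g c"
proof (rule DERIV_nonpos_imp_decreasing_open[OF \<open>c \<le> d\<close> _ continuous_shifted[OF assms(1,3)]])
  fix t assume t: "c < t" "t < d"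
  hence "a < t" "t < b" using assms by auto
  thus "\<exists>y. ((\<lambda>t. f t - \<mu> * g t) has_real_derivative y) (at t) \<and> y \<le> 0"
    using deriv_shifted deriv_g_pos[of t] le[OF t] by (intro exI conjI) (auto simp: mult_nonneg_nonpos)
qed

lemma below_tangent:
  assumes "a < e" "e < b" "a \<le> x" "x \<le> b"
  shows "f x \<le> f e + f' e / g' e * (g x - g e)"
proof -
  define \<mu> where "\<mu> = f' e / g' e"
  have "f x - \<mu> * g x \<le> f e - \<mu> * g e"
  proof (cases "x \<le> e")
    case True
    show ?thesis
      by (rule shifted_mono) (use True assms ratio_antimono in \<open>auto simp: \<mu>_def\<close>)
  next
    case False
    show ?thesis
      by (rule shifted_antimono) (use False assms ratio_antimono in \<open>auto simp: \<mu>_def\<close>)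
  qed
  thus ?thesis unfolding \<mu>_def[symmetric] by (simp add: right_diff_distrib)
qed

lemma g_less: "g a < g b"
  using DERIV_pos_imp_increasing_open[OF less _ continuous_g] deriv_g deriv_g_pos by blast

text \<open>The slope \<open>\<mu>\<close> makes \<open>f - \<mu> g\<close> agree at \<open>a\<close> and \<open>b\<close>, so it suffices that it
  increases on \<open>[a, x]\<close> or decreases on \<open>[x, b]\<close>; as \<open>f'/g'\<close> is antitone, if it is not
  \<open>\<ge> \<mu>\<close> throughout \<open>(a, x)\<close> then it is \<open>\<le> \<mu>\<close> throughout \<open>(x, b)\<close>.\<close>
lemma above_chord:
  assumes "a \<le> x" "x \<le> b"
  shows "f a + (f b - f a) / (g b - g a) * (g x - g a) \<le> f x"
proof -
  define \<mu> where "\<mu> = (f b - f a) / (g b - g a)"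
  have ends: "f a - \<mu> * g a = f b - \<mu> * g b"
    using g_less unfolding \<mu>_def by (simp add: field_simps)
  have "f a - \<mu> * g a \<le> f x - \<mu> * g x"
  proof (cases "\<forall>t. a < t \<and> t < x \<longrightarrow> \<mu> \<le> f' t / g' t")
    case True
    thus ?thesis using shifted_mono[of a x] assms by auto
  next
    case False
    then obtain t0 where t0: "a < t0" "t0 < x" "f' t0 / g' t0 < \<mu>" by auto
    have "f' t / g' t \<le> \<mu>" if "x < t" "t < b" for t
      using ratio_antimono[of t0 t] t0 that by auto
    thus ?thesis using shifted_antimono[of x b] assms ends by auto
  qed
  thus ?thesis unfolding \<mu>_def[symmetric] by (simp add: right_diff_distrib)
qed

end


section \<open>Binary entropy\<close>

text \<open>With Isabelle's \<open>ln 0 = 0\<close> this formula is also right at \<open>p = 0\<close> and \<open>p = 1\<close>.\<close>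
lemma bin_entropy_ln: "bin_entropy p = - (p * ln p + (1 - p) * ln (1 - p)) / ln 2"
  unfolding bin_entropy_def log_def by (auto simp: field_simps)

lemma bin_entropy_0 [simp]: "bin_entropy 0 = 0"
  and bin_entropy_1 [simp]: "bin_entropy 1 = 0"
  and bin_entropy_half [simp]: "bin_entropy (1/2) = 1"
  by (simp_all add: bin_entropy_def log_divide)

lemma bin_entropy_one_minus: "bin_entropy (1 - p) = bin_entropy p"
  unfolding bin_entropy_ln by (simp add: algebra_simps)

definition bin_entropy' :: "real \<Rightarrow> real" where
  "bin_entropy' p = ln ((1 - p) / p) / ln 2"

lemma bin_entropy_has_real_derivative:
  assumes "0 < p" "p < 1"
  shows "(bin_entropy has_real_derivative bin_entropy' p) (at p)"
proof -
  have eq: "bin_entropy = (\<lambda>p. - (p * ln p + (1 - p) * ln (1 - p)) / ln 2)"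
    using bin_entropy_ln by blast
  show ?thesis unfolding eq bin_entropy'_def
    by (auto intro!: derivative_eq_intros) (use assms in \<open>simp_all add: ln_div field_simps\<close>)
qed

lemma bin_entropy'_pos: "0 < p \<Longrightarrow> p < 1/2 \<Longrightarrow> 0 < bin_entropy' p"
  unfolding bin_entropy'_def by (simp add: field_simps)

lemma continuous_on_x_ln_x: "continuous_on {0..1} (\<lambda>x::real. x * ln x)"
  unfolding continuous_on_eq_continuous_within
proof
  fix x :: real assume x: "x \<in> {0..1}"
  show "continuous (at x within {0..1}) (\<lambda>x. x * ln x)"
  proof (cases "x = 0")
    case True
    have "((\<lambda>x::real. x * ln x) \<longlongrightarrow> 0) (at_right 0)" by real_asymp
    thus ?thesis using True by (simp add: continuous_within at_within_Icc_at_right)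
  next
    case False
    hence "isCont (\<lambda>x. x * ln x) x" using x by (auto intro!: continuous_intros)
    thus ?thesis by (rule continuous_at_imp_continuous_within)
  qed
qed

lemma continuous_on_bin_entropy: "continuous_on {0..1} bin_entropy"
proof -
  have eq: "bin_entropy = (\<lambda>p. - (p * ln p + (1 - p) * ln (1 - p)) / ln 2)"
    using bin_entropy_ln by blast
  have reflected: "continuous_on {0..1} (\<lambda>p::real. (1 - p) * ln (1 - p))"
    by (rule continuous_on_compose2[OF continuous_on_x_ln_x, where f="\<lambda>p. 1 - p"])
       (auto intro!: continuous_intros)
  show ?thesis unfolding eq by (intro continuous_intros continuous_on_x_ln_x reflected) auto
qed

lemma bin_entropy_strict_mono:
  assumes "0 \<le> a" "a < b" "b \<le> 1/2"
  shows "bin_entropy a < bin_entropy b"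
proof (rule DERIV_pos_imp_increasing_open[OF assms(2)])
  fix x assume "a < x" "x < b"
  thus "\<exists>y. (bin_entropy has_real_derivative y) (at x) \<and> 0 < y"
    using bin_entropy_has_real_derivative[of x] bin_entropy'_pos[of x] assms by auto
qed (rule continuous_on_subset[OF continuous_on_bin_entropy], use assms in auto)

lemma bin_entropy_mono: "0 \<le> a \<Longrightarrow> a \<le> b \<Longrightarrow> b \<le> 1/2 \<Longrightarrow> bin_entropy a \<le> bin_entropy b"
  using bin_entropy_strict_mono[of a b] by (cases "a = b") auto

lemma bin_entropy_inj:
  assumes "0 \<le> a" "a \<le> 1/2" "0 \<le> b" "b \<le> 1/2" "bin_entropy a = bin_entropy b"
  shows "a = b"
  using bin_entropy_strict_mono[of a b] bin_entropy_strict_mono[of b a] assms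
  by (cases a b rule: linorder_cases) auto

lemma bin_entropy_range:
  assumes "0 \<le> p" "p \<le> 1"
  shows "0 \<le> bin_entropy p \<and> bin_entropy p \<le> 1"
proof -
  have half: "0 \<le> bin_entropy q \<and> bin_entropy q \<le> 1" if "0 \<le> q" "q \<le> 1/2" for q
    using bin_entropy_mono[of 0 q] bin_entropy_mono[of q "1/2"] that by simp
  show ?thesis
    using half[of p] half[of "1 - p"] assms bin_entropy_one_minus[of p] by (cases "p \<le> 1/2") auto
qed

lemma bin_entropy_inv:
  assumes "0 \<le> c" "c \<le> 1"
  shows "0 \<le> bin_entropy_inv c" "bin_entropy_inv c \<le> 1/2" "bin_entropy (bin_entropy_inv c) = c"
proof -
  obtain e where "0 \<le> e" "e \<le> 1/2" "bin_entropy e = c"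
    using IVT'[of bin_entropy 0 c "1/2"] assms
      continuous_on_subset[OF continuous_on_bin_entropy, of "{0..1/2}"] by auto
  hence "\<exists>!e. 0 \<le> e \<and> e \<le> 1/2 \<and> bin_entropy e = c"
    using bin_entropy_inj by blast
  hence "0 \<le> bin_entropy_inv c \<and> bin_entropy_inv c \<le> 1/2 \<and> bin_entropy (bin_entropy_inv c) = c"
    unfolding bin_entropy_inv_def by (rule theI')
  thus "0 \<le> bin_entropy_inv c" "bin_entropy_inv c \<le> 1/2" "bin_entropy (bin_entropy_inv c) = c"
    by auto
qed

lemma bin_entropy_inv_bin_entropy:
  assumes "0 \<le> e" "e \<le> 1/2"
  shows "bin_entropy_inv (bin_entropy e) = e"
  using bin_entropy_range[of e] assms bin_entropy_inv[of "bin_entropy e"]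
    bin_entropy_inj[of "bin_entropy_inv (bin_entropy e)" e] by auto


section \<open>The function \<open>F\<close> of a binary symmetric channel\<close>

definition bsc_F :: "real \<Rightarrow> real \<Rightarrow> real" where
  "bsc_F \<rho> p = 2 powr (-\<rho>) * (p powr (1/(1+\<rho>)) + (1 - p) powr (1/(1+\<rho>))) powr (1+\<rho>)"

definition bsc_F' :: "real \<Rightarrow> real \<Rightarrow> real" where
  "bsc_F' \<rho> p = 2 powr (-\<rho>) * (p powr (1/(1+\<rho>)) + (1 - p) powr (1/(1+\<rho>))) powr \<rho>
      * (p powr (1/(1+\<rho>) - 1) - (1 - p) powr (1/(1+\<rho>) - 1))"

lemma F_bsc_eq_bsc_F: "F_bsc \<rho> C = bsc_F \<rho> (bin_entropy_inv (1 - C))"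
  unfolding F_bsc_def bsc_F_def Let_def ..

lemma bsc_F_has_real_derivative:
  assumes "\<rho> > -1" "0 < p" "p < 1"
  shows "(bsc_F \<rho> has_real_derivative bsc_F' \<rho> p) (at p)"
proof -
  let ?s = "1/(1+\<rho>)"
  have "0 < p powr ?s + (1 - p) powr ?s" using assms by (intro add_pos_pos) auto
  moreover have p: "p powr (?s - 1) = p powr ?s / p"
    and q: "(1 - p) powr (?s - 1) = (1 - p) powr ?s / (1 - p)"
    using assms by (simp_all add: powr_diff)
  ultimately show ?thesis unfolding bsc_F_def[abs_def] bsc_F'_def p q
    by (auto intro!: derivative_eq_intros) (use assms in \<open>simp_all add: p q right_diff_distrib\<close>)
qed

lemma continuous_on_bsc_F:
  assumes "\<rho> > -1"
  shows "continuous_on {0..1} (bsc_F \<rho>)"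
proof -
  let ?s = "1/(1+\<rho>)"
  have pos: "0 < p powr ?s + (1 - p) powr ?s" if "0 \<le> p" "p \<le> 1" for p
    using that assms by (cases "p = 0") (auto intro: add_pos_nonneg)
  have "continuous_on {0..1} (\<lambda>p::real. p powr ?s + (1 - p) powr ?s)"
    by (intro continuous_on_add continuous_on_powr' continuous_on_id continuous_on_const
          continuous_on_diff) (use assms in auto)
  thus ?thesis unfolding bsc_F_def[abs_def]
    by (intro continuous_on_mult continuous_on_const continuous_on_powr[OF _ continuous_on_const])
       (use pos in \<open>fastforce+\<close>)
qed

lemma bsc_F_0 [simp]: "bsc_F \<rho> 0 = 2 powr (-\<rho>)"
  unfolding bsc_F_def by simp

lemma bsc_F_one_minus: "bsc_F \<rho> (1 - p) = bsc_F \<rho> p"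
  unfolding bsc_F_def by (simp add: algebra_simps)

lemma bsc_F_half:
  assumes "\<rho> > -1"
  shows "bsc_F \<rho> (1/2) = 1"
proof -
  define s where "s = 1/(1+\<rho>)"
  have "(1/2::real) powr s + (1 - 1/2) powr s = 2 powr (1 - s)"
    by (simp add: powr_diff powr_divide)
  moreover have "(1 - s) * (1 + \<rho>) = \<rho>"
    unfolding s_def using assms by (simp add: field_simps)
  ultimately show ?thesis
    unfolding bsc_F_def s_def[symmetric] by (simp add: powr_powr powr_minus_divide)
qed

lemma bsc_F_1: "0 \<le> p \<Longrightarrow> p \<le> 1 \<Longrightarrow> bsc_F 1 p = (1/2) * (sqrt p + sqrt (1 - p))^2"
  unfolding bsc_F_def by (simp add: powr_half_sqrt powr_minus_divide)

lemma F_bsc_1: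
  assumes "0 \<le> C" "C \<le> 1"
  shows "F_bsc 1 C = (1/2) * (sqrt (bin_entropy_inv (1 - C)) + sqrt (1 - bin_entropy_inv (1 - C)))^2"
  using bin_entropy_inv[of "1 - C"] assms by (simp add: F_bsc_eq_bsc_F bsc_F_1)

lemma bsc_F_eq_if_bin_entropy_eq:
  assumes "0 \<le> p" "p \<le> 1" "0 \<le> e" "e \<le> 1/2" "bin_entropy p = bin_entropy e"
  shows "bsc_F \<rho> p = bsc_F \<rho> e"
  using bin_entropy_inj[of p e] bin_entropy_inj[of "1 - p" e] assms
    bin_entropy_one_minus[of p] bsc_F_one_minus[of \<rho> p]
  by (cases "p \<le> 1/2") auto

section \<open>Monotonicity of the derivative ratio\<close>

lemma one_add_two_mul_exp_le:
  fixes z :: real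
  assumes "0 \<le> z"
  shows "1 + 2 * z * exp z \<le> exp z * exp z"
proof -
  have "(\<lambda>z. exp z * exp z - 1 - 2 * z * exp z) 0 \<le> (\<lambda>z. exp z * exp z - 1 - 2 * z * exp z) z"
  proof (rule DERIV_nonneg_imp_nondecreasing[OF assms])
    fix x :: real
    have "0 \<le> exp x - 1 - x" using exp_ge_add_one_self[of x] by linarith
    hence "0 \<le> 2 * exp x * (exp x - 1 - x)" by simp
    thus "\<exists>y. ((\<lambda>z. exp z * exp z - 1 - 2 * z * exp z) has_real_derivative y) (at x) \<and> 0 \<le> y"
      by (intro exI[of _ "2 * exp x * (exp x - 1 - x)"] conjI)
         (auto intro!: derivative_eq_intros simp: algebra_simps)
  qed
  thus ?thesis by simp
qed

lemma mul_one_add_exp_le: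
  fixes z :: real
  assumes "z \<le> 0"
  shows "z * (1 + exp z) \<le> 2 * (exp z - 1)"
proof -
  have "(\<lambda>z. 2 * (exp z - 1) - z * (1 + exp z)) 0 \<le> (\<lambda>z. 2 * (exp z - 1) - z * (1 + exp z)) z"
  proof (rule DERIV_nonpos_imp_nonincreasing[OF assms])
    fix x :: real assume "z \<le> x" "x \<le> 0"
    have "1 - x \<le> exp (-x)" using exp_ge_add_one_self[of "-x"] by simp
    hence "exp x * (1 - x) \<le> 1" by (simp add: exp_minus field_simps)
    thus "\<exists>y. ((\<lambda>z. 2 * (exp z - 1) - z * (1 + exp z)) has_real_derivative y) (at x) \<and> y \<le> 0"
      by (intro exI[of _ "exp x - 1 - x * exp x"] conjI)
         (auto intro!: derivative_eq_intros simp: algebra_simps)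
  qed
  thus ?thesis by simp
qed

text \<open>The gap is \<open>exp w (exp z - 1 - z) + (exp z - 1 - z exp z)\<close>, which increases with \<open>w\<close>;
  at its least admissible value \<open>w = max z 0\<close> it is nonnegative by the two previous lemmas.\<close>
lemma mul_exp_add_exp_le:
  fixes z w :: real
  assumes "z \<le> w" "0 \<le> w"
  shows "z * (exp z + exp w) \<le> (exp z - 1) * (exp w + 1)"
proof -
  have gap: "(exp z - 1) * (exp w + 1) - z * (exp z + exp w)
      = exp w * (exp z - 1 - z) + (exp z - 1 - z * exp z)"
    by (simp add: algebra_simps)
  have nonneg: "0 \<le> exp z - 1 - z" using exp_ge_add_one_self[of z] by linarith
  have "0 \<le> exp w * (exp z - 1 - z) + (exp z - 1 - z * exp z)"
  proof (cases "0 \<le> z")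
    case True
    have "exp z * (exp z - 1 - z) \<le> exp w * (exp z - 1 - z)"
      using assms nonneg by (intro mult_right_mono) auto
    thus ?thesis using one_add_two_mul_exp_le[OF True] by (simp add: algebra_simps)
  next
    case False
    have "1 * (exp z - 1 - z) \<le> exp w * (exp z - 1 - z)"
      using assms nonneg by (intro mult_right_mono) auto
    thus ?thesis using mul_one_add_exp_le[of z] False by (simp add: algebra_simps)
  qed
  thus ?thesis using gap by linarith
qed

text \<open>In the log-likelihood coordinate \<open>y = ln ((1 - p) / p)\<close> the ratio
  \<open>bsc_F' \<rho> p / bin_entropy' p\<close> is a negative multiple of \<open>llr_ratio (1/(1+\<rho>)) \<rho> y\<close>.\<close>
definition llr_ratio :: "real \<Rightarrow> real \<Rightarrow> real \<Rightarrow> real" where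
  "llr_ratio s r y = (1 + exp (s * y)) powr r * (exp ((s - 1) * y) - 1) / y"

lemma llr_ratio_has_real_derivative:
  assumes s: "s > 0" and y: "y > 0" and r: "r * s = 1 - s"
  shows "(llr_ratio s r has_real_derivative
     (1 + exp (s * y)) powr r * ((s - 1) * y * (exp ((s - 1) * y) + exp (s * y))
        - (exp ((s - 1) * y) - 1) * (exp (s * y) + 1)) / (y^2 * (1 + exp (s * y)))) (at y)"
proof -
  have pos: "0 < 1 + exp (s * y)" by (simp add: add_pos_pos)
  have powr_pred: "(1 + exp (s * y)) powr (r - 1) = (1 + exp (s * y)) powr r / (1 + exp (s * y))"
    using pos by (simp add: powr_diff)
  have alg: "((r * (P / (1 + ea)) * (ea * s) * (eb - 1) + eb * (s - 1) * P) * y - P * (eb - 1)) / (y * y)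
      = P * ((s - 1) * y * (eb + ea) - (eb - 1) * (ea + 1)) / (y^2 * (1 + ea))"
    if "0 < 1 + ea" for P ea eb :: real
  proof -
    have "r * (P / (1 + ea)) * (ea * s) * (eb - 1) = (r * s) * P * ea * (eb - 1) / (1 + ea)"
      by simp
    also have "r * s = 1 - s" by (rule r)
    finally have rs: "r * (P / (1 + ea)) * (ea * s) * (eb - 1) = (1 - s) * P * ea * (eb - 1) / (1 + ea)" .
    show ?thesis unfolding rs using that y by (simp add: field_simps power2_eq_square)
  qed
  show ?thesis unfolding llr_ratio_def[abs_def]
    apply (auto intro!: derivative_eq_intros)
    apply (rule pos)
    using y apply simp
    unfolding powr_pred exp_add by (rule alg[OF pos])
qed

lemma llr_ratio_antimono:
  assumes s: "s > 0" and r: "r * s = 1 - s" and y: "0 < y1" "y1 \<le> y2"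
  shows "llr_ratio s r y2 \<le> llr_ratio s r y1"
proof (rule DERIV_nonpos_imp_nonincreasing[OF y(2)])
  fix y assume "y1 \<le> y" "y \<le> y2"
  hence y0: "y > 0" using y by simp
  have "(s - 1) * y * (exp ((s - 1) * y) + exp (s * y)) \<le> (exp ((s - 1) * y) - 1) * (exp (s * y) + 1)"
    using s y0 by (intro mul_exp_add_exp_le) (auto simp: algebra_simps)
  hence "(1 + exp (s * y)) powr r * ((s - 1) * y * (exp ((s - 1) * y) + exp (s * y))
        - (exp ((s - 1) * y) - 1) * (exp (s * y) + 1)) / (y^2 * (1 + exp (s * y))) \<le> 0"
    using y0 by (intro divide_nonpos_pos mult_nonneg_nonpos mult_pos_pos) (auto intro: add_pos_pos)
  thus "\<exists>d. (llr_ratio s r has_real_derivative d) (at y) \<and> d \<le> 0"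
    using llr_ratio_has_real_derivative[OF s y0 r] by blast
qed

lemma bsc_F'_div_bin_entropy':
  assumes r: "\<rho> > -1" and p: "0 < p" "p < 1"
  shows "bsc_F' \<rho> p / bin_entropy' p
    = - (2 powr (-\<rho>) * ln 2) * llr_ratio (1/(1+\<rho>)) \<rho> (ln ((1 - p) / p))"
proof -
  define s where "s = 1/(1+\<rho>)"
  define L where "L = ln p"
  define M where "M = ln (1 - p)"
  define N where "N = p powr s + (1 - p) powr s"
  have y: "ln ((1 - p) / p) = M - L" unfolding L_def M_def using p by (simp add: ln_div)
  have p_powr: "p powr a = exp (a * L)" for a unfolding L_def using p by (simp add: powr_def)
  have q_powr: "(1 - p) powr a = exp (a * M)" for a unfolding M_def using p by (simp add: powr_def)
  have N_pos: "N > 0" unfolding N_def p_powr q_powr by (simp add: add_pos_pos)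
  have "1 + exp (s * (M - L)) = N * exp (- s * L)"
    unfolding N_def p_powr q_powr by (simp add: ring_distribs exp_add[symmetric] exp_diff)
  hence A: "(1 + exp (s * (M - L))) powr \<rho> = N powr \<rho> * exp (- s * L * \<rho>)"
    using N_pos by (simp add: powr_mult exp_powr_real)
  have B: "exp ((s - 1) * (M - L)) - 1 = ((1 - p) powr (s - 1) - p powr (s - 1)) * exp (- (s - 1) * L)"
    unfolding p_powr q_powr left_diff_distrib exp_add[symmetric] by (simp add: algebra_simps)
  have "- s * L * \<rho> + - (s - 1) * L = - L * (s * \<rho> + s - 1)" by (simp add: algebra_simps)
  moreover have "s * \<rho> + s - 1 = 0" unfolding s_def using r by (simp add: field_simps)
  ultimately have C: "exp (- s * L * \<rho>) * exp (- (s - 1) * L) = 1"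
    by (simp add: exp_add[symmetric])
  have Q: "llr_ratio s \<rho> (M - L) = N powr \<rho> * ((1 - p) powr (s - 1) - p powr (s - 1)) / (M - L)"
    unfolding llr_ratio_def A B using C by (simp add: mult.assoc mult.left_commute[of "exp _"])
  show ?thesis unfolding Q bsc_F'_def bin_entropy'_def s_def[symmetric] N_def[symmetric] y
    by (cases "M = L") (simp_all add: field_simps)
qed

lemma bsc_F'_div_bin_entropy'_antimono:
  assumes r: "\<rho> > -1" and p: "0 < p1" "p1 \<le> p2" "p2 < 1/2"
  shows "bsc_F' \<rho> p2 / bin_entropy' p2 \<le> bsc_F' \<rho> p1 / bin_entropy' p1"
proof -
  define s where "s = 1/(1+\<rho>)"
  have "s > 0" "\<rho> * s = 1 - s" unfolding s_def using r by (simp_all add: field_simps)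
  moreover have "0 < ln ((1 - p2) / p2)" "ln ((1 - p2) / p2) \<le> ln ((1 - p1) / p1)"
    using p by (simp_all add: field_simps)
  ultimately have "llr_ratio s \<rho> (ln ((1 - p1) / p1)) \<le> llr_ratio s \<rho> (ln ((1 - p2) / p2))"
    by (rule llr_ratio_antimono)
  hence "- (2 powr (-\<rho>) * ln 2) * llr_ratio s \<rho> (ln ((1 - p2) / p2))
      \<le> - (2 powr (-\<rho>) * ln 2) * llr_ratio s \<rho> (ln ((1 - p1) / p1))"
    by (intro mult_left_mono_neg) simp_all
  thus ?thesis using p by (simp add: bsc_F'_div_bin_entropy'[OF r] s_def[symmetric])
qed

lemma concave_wrt_bsc_F:
  assumes "\<rho> > -1"
  shows "concave_wrt 0 (1/2) (bsc_F \<rho>) bin_entropy (bsc_F' \<rho>) bin_entropy'"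
proof
  show "continuous_on {0..1/2} (bsc_F \<rho>)"
    by (rule continuous_on_subset[OF continuous_on_bsc_F[OF assms]]) auto
  show "continuous_on {0..1/2} bin_entropy"
    by (rule continuous_on_subset[OF continuous_on_bin_entropy]) auto
qed (use assms bsc_F_has_real_derivative bin_entropy_has_real_derivative bin_entropy'_pos
       bsc_F'_div_bin_entropy'_antimono in auto)

lemma bsc_F_ge_chord:
  assumes r: "\<rho> > -1" and p: "0 \<le> p" "p \<le> 1"
  shows "2 powr (-\<rho>) + (1 - 2 powr (-\<rho>)) * bin_entropy p \<le> bsc_F \<rho> p"
proof -
  have half: "2 powr (-\<rho>) + (1 - 2 powr (-\<rho>)) * bin_entropy q \<le> bsc_F \<rho> q"
    if "0 \<le> q" "q \<le> 1/2" for q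
    using concave_wrt.above_chord[OF concave_wrt_bsc_F[OF r] that] by (simp add: bsc_F_half[OF r])
  show ?thesis
    using half[of p] half[of "1 - p"] p bin_entropy_one_minus[of p] bsc_F_one_minus[of \<rho> p]
    by (cases "p \<le> 1/2") auto
qed

lemma bsc_F_le_tangent:
  assumes r: "\<rho> > -1" and e: "0 < e" "e < 1/2" and p: "0 \<le> p" "p \<le> 1"
  shows "bsc_F \<rho> p \<le> bsc_F \<rho> e + bsc_F' \<rho> e / bin_entropy' e * (bin_entropy p - bin_entropy e)"
proof -
  have half: "bsc_F \<rho> q \<le> bsc_F \<rho> e + bsc_F' \<rho> e / bin_entropy' e * (bin_entropy q - bin_entropy e)"
    if "0 \<le> q" "q \<le> 1/2" for q
    using concave_wrt.below_tangent[OF concave_wrt_bsc_F[OF r] e that] .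
  show ?thesis
    using half[of p] half[of "1 - p"] p bin_entropy_one_minus[of p] bsc_F_one_minus[of \<rho> p]
    by (cases "p \<le> 1/2") auto
qed


section \<open>Averaging over the outputs\<close>

lemma F_bec_pos:
  assumes "0 \<le> C" "C \<le> 1"
  shows "0 < F_bec \<rho> C"
proof -
  have "F_bec \<rho> C = (1 - C) + C * 2 powr (-\<rho>)" unfolding F_bec_def by (simp add: algebra_simps)
  moreover have "0 < 1 - C \<or> 0 < C * 2 powr (-\<rho>)" using assms by (cases "C = 1") auto
  ultimately show ?thesis using assms by (auto intro: add_pos_nonneg add_nonneg_pos)
qed

lemma F_bec_1: "F_bec 1 C = (1 + (1 - C)) / 2"
  unfolding F_bec_def by (simp add: powr_minus_divide field_simps)

lemma F_term_eq:
  fixes a S s r :: real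
  assumes a: "a \<ge> 0" and S: "S > 0" and sr: "s * (1 + r) = 1" and s: "s > 0"
  shows "(if a > 0 then a * ((1/2) * S / a powr s) powr r else 0) = 2 powr (-r) * S powr r * a powr s"
proof (cases "a > 0")
  case True
  have "a * (1 / (a powr s) powr r) = a powr (1 - s * r)"
    using True by (simp add: powr_powr powr_diff)
  also have "1 - s * r = s" using sr by (simp add: algebra_simps)
  finally have cancel: "a * (1 / (a powr s) powr r) = a powr s" .
  have "((1/2) * S / a powr s) powr r = 2 powr (-r) * S powr r * (1 / (a powr s) powr r)"
    using S True by (simp add: powr_divide powr_mult powr_minus_divide)
  hence "a * ((1/2) * S / a powr s) powr r = 2 powr (-r) * S powr r * (a * (1 / (a powr s) powr r))"
    by simp
  thus ?thesis unfolding cancel using True by simp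
qed (use a s in simp)

lemma F_pair_eq:
  fixes a b r :: real
  assumes a: "a \<ge> 0" and b: "b \<ge> 0" and r: "r > -1"
  shows "(1/2) * (if a > 0 then a * ((1/2) * (a powr (1/(1+r)) + b powr (1/(1+r))) / a powr (1/(1+r))) powr r else 0)
       + (1/2) * (if b > 0 then b * ((1/2) * (a powr (1/(1+r)) + b powr (1/(1+r))) / b powr (1/(1+r))) powr r else 0)
       = (1/2) * (a + b) * bsc_F r (a / (a + b))"
proof (cases "a + b = 0")
  case True
  hence "a = 0" "b = 0" using a b by auto
  thus ?thesis by simp
next
  case False
  hence m: "a + b > 0" using a b by simp
  define s where "s = 1/(1+r)"
  have s: "s > 0" and sr: "s * (1 + r) = 1" unfolding s_def using r by simp_all
  define S where "S = a powr s + b powr s"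
  have S: "S > 0" unfolding S_def using m a b s
    by (cases "a > 0") (auto intro: add_pos_nonneg add_nonneg_pos)
  have "S powr (1 + r) = S powr r * S" using S by (simp add: powr_add)
  hence lhs: "(1/2) * (if a > 0 then a * ((1/2) * S / a powr s) powr r else 0)
       + (1/2) * (if b > 0 then b * ((1/2) * S / b powr s) powr r else 0)
       = (1/2) * 2 powr (-r) * S powr (1 + r)"
    unfolding F_term_eq[OF a S sr s] F_term_eq[OF b S sr s] by (simp add: S_def algebra_simps)
  have "1 - a / (a + b) = b / (a + b)" using m by (simp add: field_simps)
  moreover have "(a / (a + b)) powr s + (b / (a + b)) powr s = S / (a + b) powr s"
    unfolding S_def using a b m by (simp add: powr_divide add_divide_distrib)
  ultimately have "bsc_F r (a / (a + b)) = 2 powr (-r) * (S / (a + b) powr s) powr (1 + r)"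
    unfolding bsc_F_def s_def[symmetric] by simp
  moreover have "(S / (a + b) powr s) powr (1 + r) = S powr (1 + r) / (a + b)"
    using S m sr by (simp add: powr_divide powr_powr)
  ultimately have "(1/2) * (a + b) * bsc_F r (a / (a + b)) = (1/2) * 2 powr (-r) * S powr (1 + r)"
    using m by (simp add: field_simps)
  thus ?thesis using lhs unfolding S_def s_def by simp
qed

lemma capacity_term_eq:
  fixes a m :: real
  assumes a: "a \<ge> 0" and m: "m > 0"
  shows "(if a > 0 then a * log 2 (a / ((1/2) * m)) else 0) = a + a * ln (a / m) / ln 2"
proof (cases "a > 0")
  case True
  have double: "a / ((1/2) * m) = 2 * (a / m)" by simp
  have "ln (2 * (a / m)) = ln 2 + ln (a / m)" using ln_mult[of 2 "a / m"] True m by simp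
  hence "log 2 (a / ((1/2) * m)) = 1 + ln (a / m) / ln 2"
    unfolding double log_def by (simp add: add_divide_distrib)
  thus ?thesis using True by (simp add: algebra_simps)
qed (use a in simp)

lemma capacity_pair_eq:
  fixes a b :: real
  assumes a: "a \<ge> 0" and b: "b \<ge> 0"
  shows "(1/2) * (if a > 0 then a * log 2 (a / ((1/2) * (a + b))) else 0)
       + (1/2) * (if b > 0 then b * log 2 (b / ((1/2) * (a + b))) else 0)
       = (1/2) * (a + b) * (1 - bin_entropy (a / (a + b)))"
proof (cases "a + b = 0")
  case True
  hence "a = 0" "b = 0" using a b by auto
  thus ?thesis by simp
next
  case False
  hence m: "a + b > 0" using a b by simp
  have "1 - a / (a + b) = b / (a + b)" using m by (simp add: field_simps)
  moreover have "(1/2) * (a + a * A / ln 2) + (1/2) * (b + b * B / ln 2)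
      = (1/2) * (a + b) * (1 - - (a / (a + b) * A + b / (a + b) * B) / ln 2)" for A B
  proof -
    have "(a + b) * (a / (a + b) * A + b / (a + b) * B)
        = ((a + b) * (a / (a + b))) * A + ((a + b) * (b / (a + b))) * B"
      by (simp add: algebra_simps)
    also have "\<dots> = a * A + b * B" using m by simp
    finally have "(a + b) * (a / (a + b) * A + b / (a + b) * B) = a * A + b * B" .
    thus ?thesis by (simp add: field_simps)
  qed
  ultimately show ?thesis unfolding capacity_term_eq[OF a m] capacity_term_eq[OF b m] bin_entropy_ln
    by simp
qed

lemma sum_bool_support_swap:
  fixes W g :: "bool \<Rightarrow> 'y \<Rightarrow> real"
  assumes "finite Y"
  shows "(\<Sum>x\<in>UNIV. (1/2) * (\<Sum>y\<in>{y\<in>Y. W x y > 0}. g x y))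
    = (\<Sum>y\<in>Y. (1/2) * (if W True y > 0 then g True y else 0)
              + (1/2) * (if W False y > 0 then g False y else 0))"
proof -
  have "(\<Sum>x\<in>UNIV. (1/2) * (\<Sum>y\<in>{y\<in>Y. W x y > 0}. g x y))
      = (\<Sum>x\<in>UNIV. \<Sum>y\<in>Y. (1/2) * (if W x y > 0 then g x y else 0))"
    by (simp add: sum.inter_filter[OF assms] sum_distrib_left)
  also have "\<dots> = (\<Sum>y\<in>Y. \<Sum>x\<in>UNIV. (1/2) * (if W x y > 0 then g x y else 0))"
    by (rule sum.swap)
  finally show ?thesis by (simp add: UNIV_bool add.commute)
qed

lemma sum_weighted_affine:
  fixes w u :: "'a \<Rightarrow> real"
  shows "(\<Sum>y\<in>A. w y * (c + d * u y)) = c * sum w A + d * (\<Sum>y\<in>A. w y * u y)"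
  by (simp add: sum.distrib sum_distrib_left algebra_simps)

lemma weighted_mean_extreme:
  assumes "finite A" "\<And>y. y \<in> A \<Longrightarrow> 0 \<le> w y" "sum w A = 1"
    and "\<And>y. y \<in> A \<Longrightarrow> 0 \<le> u y \<and> u y \<le> 1"
    and m: "(\<Sum>y\<in>A. w y * u y) \<in> {0, 1::real}" and "y \<in> A" "w y \<noteq> 0"
  shows "u y = (\<Sum>y\<in>A. w y * u y)"
proof (cases "(\<Sum>y\<in>A. w y * u y) = 0")
  case True
  hence "w y * u y = 0"
    using sum_nonneg_eq_0_iff[OF assms(1), of "\<lambda>y. w y * u y"] assms by auto
  thus ?thesis using True assms by simp
next
  case False
  hence "(\<Sum>y\<in>A. w y * (1 - u y)) = 0"
    using m assms(3) by (simp add: right_diff_distrib sum_subtractf)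
  hence "w y * (1 - u y) = 0"
    using sum_nonneg_eq_0_iff[OF assms(1), of "\<lambda>y. w y * (1 - u y)"] assms by auto
  thus ?thesis using False m assms by simp
qed

definition posterior :: "(bool \<Rightarrow> 'y \<Rightarrow> real) \<Rightarrow> 'y \<Rightarrow> real" where
  "posterior W y = W True y / (W True y + W False y)"

definition equivocation :: "(bool \<Rightarrow> 'y \<Rightarrow> real) \<Rightarrow> 'y set \<Rightarrow> real" where
  "equivocation W Y = (\<Sum>y\<in>Y. out_prob W y * bin_entropy (posterior W y))"

lemma sum_UNIV_bool: "(\<Sum>x\<in>UNIV. f x) = f True + f False"
  by (simp add: UNIV_bool add.commute)

lemma out_prob_bool: "out_prob W y = (1/2) * (W True y + W False y)"
  unfolding out_prob_def sum_UNIV_bool ..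

locale binary_input_channel =
  fixes W :: "bool \<Rightarrow> 'y \<Rightarrow> real" and Y :: "'y set"
  assumes finite_outputs: "finite Y"
    and nonneg: "\<And>x y. y \<in> Y \<Longrightarrow> 0 \<le> W x y"
    and row_sum: "\<And>x. (\<Sum>y\<in>Y. W x y) = 1"
begin

lemma out_prob_nonneg: "y \<in> Y \<Longrightarrow> 0 \<le> out_prob W y"
  using nonneg by (simp add: out_prob_bool)

lemma sum_out_prob: "(\<Sum>y\<in>Y. out_prob W y) = 1"
  using row_sum[of True] row_sum[of False]
  by (simp add: out_prob_bool sum.distrib sum_divide_distrib[symmetric])

lemma posterior_range: "y \<in> Y \<Longrightarrow> 0 \<le> posterior W y \<and> posterior W y \<le> 1"
  using nonneg[of y True] nonneg[of y False] unfolding posterior_def by (auto simp: divide_le_eq_1)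

lemma bin_entropy_posterior_range: "y \<in> Y \<Longrightarrow> 0 \<le> bin_entropy (posterior W y) \<and> bin_entropy (posterior W y) \<le> 1"
  using bin_entropy_range posterior_range by blast

lemma Ffun_eq:
  assumes "\<rho> > -1"
  shows "Ffun W Y \<rho> = (\<Sum>y\<in>Y. out_prob W y * bsc_F \<rho> (posterior W y))"
  unfolding Ffun_def sum_bool_support_swap[OF finite_outputs] sum_UNIV_bool out_prob_bool posterior_def
  using nonneg assms by (intro sum.cong refl F_pair_eq) simp_all

lemma capacity_eq: "capacity W Y = 1 - equivocation W Y"
proof -
  have "capacity W Y = (\<Sum>y\<in>Y. out_prob W y * (1 - bin_entropy (posterior W y)))"
    unfolding capacity_def sum_bool_support_swap[OF finite_outputs] out_prob_bool posterior_def
    using nonneg by (intro sum.cong refl capacity_pair_eq) simp_all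
  thus ?thesis using sum_out_prob
    by (simp add: equivocation_def right_diff_distrib sum_subtractf)
qed

lemma equivocation_range: "0 \<le> equivocation W Y \<and> equivocation W Y \<le> 1"
proof -
  have "0 \<le> equivocation W Y"
    unfolding equivocation_def
    using out_prob_nonneg bin_entropy_posterior_range by (intro sum_nonneg mult_nonneg_nonneg) auto
  moreover have "equivocation W Y \<le> (\<Sum>y\<in>Y. out_prob W y * 1)"
    unfolding equivocation_def
    using out_prob_nonneg bin_entropy_posterior_range by (intro sum_mono mult_left_mono) auto
  ultimately show ?thesis using sum_out_prob by simp
qed

lemma capacity_range: "0 \<le> capacity W Y \<and> capacity W Y \<le> 1"
  using equivocation_range capacity_eq by simp

lemma F_bec_le_Ffun:
  assumes r: "\<rho> > -1"
  shows "F_bec \<rho> (capacity W Y) \<le> Ffun W Y \<rho>"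
proof -
  have "F_bec \<rho> (capacity W Y)
      = (\<Sum>y\<in>Y. out_prob W y * (2 powr (-\<rho>) + (1 - 2 powr (-\<rho>)) * bin_entropy (posterior W y)))"
    unfolding sum_weighted_affine sum_out_prob F_bec_def capacity_eq equivocation_def
    by (simp add: algebra_simps)
  also have "\<dots> \<le> (\<Sum>y\<in>Y. out_prob W y * bsc_F \<rho> (posterior W y))"
    using out_prob_nonneg posterior_range bsc_F_ge_chord[OF r]
    by (intro sum_mono mult_left_mono) auto
  finally show ?thesis using Ffun_eq[OF r] by simp
qed

lemma Ffun_le_tangent:
  assumes r: "\<rho> > -1" and e: "0 < e" "e < 1/2"
  shows "Ffun W Y \<rho> \<le> bsc_F \<rho> e + bsc_F' \<rho> e / bin_entropy' e * (equivocation W Y - bin_entropy e)"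
proof -
  define T where "T = bsc_F' \<rho> e / bin_entropy' e"
  have "bsc_F \<rho> (posterior W y) \<le> (bsc_F \<rho> e - T * bin_entropy e) + T * bin_entropy (posterior W y)"
    if "y \<in> Y" for y
  proof -
    have "bsc_F \<rho> (posterior W y) \<le> bsc_F \<rho> e + T * (bin_entropy (posterior W y) - bin_entropy e)"
      using bsc_F_le_tangent[OF r e] posterior_range[OF that] unfolding T_def by auto
    thus ?thesis by (simp add: right_diff_distrib)
  qed
  hence "Ffun W Y \<rho> \<le> (\<Sum>y\<in>Y. out_prob W y * ((bsc_F \<rho> e - T * bin_entropy e) + T * bin_entropy (posterior W y)))"
    unfolding Ffun_eq[OF r] using out_prob_nonneg by (intro sum_mono mult_left_mono) auto
  also have "\<dots> = bsc_F \<rho> e + T * (equivocation W Y - bin_entropy e)"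
    unfolding sum_weighted_affine sum_out_prob equivocation_def by (simp add: algebra_simps)
  finally show ?thesis unfolding T_def .
qed

text \<open>At \<open>e \<in> {0, 1/2}\<close> there is no tangent. But then all outputs of positive probability
  have posterior entropy \<open>0\<close> resp. \<open>1\<close>, so \<open>F\<close> is the BSC value itself.\<close>
lemma Ffun_eq_if_equivocation_extreme:
  assumes r: "\<rho> > -1" and H: "equivocation W Y \<in> {0, 1}"
    and e: "0 \<le> e" "e \<le> 1/2" "bin_entropy e = equivocation W Y"
  shows "Ffun W Y \<rho> = bsc_F \<rho> e"
proof -
  have "bsc_F \<rho> (posterior W y) = bsc_F \<rho> e" if "y \<in> Y" "out_prob W y \<noteq> 0" for y
  proof -
    have "bin_entropy (posterior W y) = equivocation W Y"
      using weighted_mean_extreme[OF finite_outputs out_prob_nonneg sum_out_prob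
          bin_entropy_posterior_range _ that] H
      unfolding equivocation_def by simp
    thus ?thesis
      using posterior_range[OF that(1)] e by (intro bsc_F_eq_if_bin_entropy_eq) auto
  qed
  hence "Ffun W Y \<rho> = (\<Sum>y\<in>Y. out_prob W y * bsc_F \<rho> e)"
    unfolding Ffun_eq[OF r] by (intro sum.cong) auto
  thus ?thesis using sum_out_prob by (simp add: sum_distrib_right[symmetric])
qed

lemma Ffun_le_F_bsc:
  assumes r: "\<rho> > -1"
  shows "Ffun W Y \<rho> \<le> F_bsc \<rho> (capacity W Y)"
proof -
  define \<epsilon> where "\<epsilon> = bin_entropy_inv (equivocation W Y)"
  have \<epsilon>: "0 \<le> \<epsilon>" "\<epsilon> \<le> 1/2" "bin_entropy \<epsilon> = equivocation W Y"
    using bin_entropy_inv equivocation_range unfolding \<epsilon>_def by auto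
  have "Ffun W Y \<rho> \<le> bsc_F \<rho> \<epsilon>"
  proof (cases "0 < \<epsilon> \<and> \<epsilon> < 1/2")
    case True
    thus ?thesis using Ffun_le_tangent[OF r] \<epsilon>(3) by fastforce
  next
    case False
    hence "\<epsilon> = 0 \<or> \<epsilon> = 1/2" using \<epsilon> by auto
    hence "equivocation W Y \<in> {0, 1}" using \<epsilon>(3) by (elim disjE) simp_all
    thus ?thesis using Ffun_eq_if_equivocation_extreme[OF r _ \<epsilon>] by simp
  qed
  thus ?thesis unfolding F_bsc_eq_bsc_F capacity_eq \<epsilon>_def by simp
qed

lemma E0_bounds:
  assumes "\<rho> > -1"
  shows "- log 2 (F_bsc \<rho> (capacity W Y)) \<le> E0 W Y \<rho>" "E0 W Y \<rho> \<le> - log 2 (F_bec \<rho> (capacity W Y))"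
proof -
  have "0 < F_bec \<rho> (capacity W Y)" using F_bec_pos capacity_range by blast
  with F_bec_le_Ffun[OF assms] Ffun_le_F_bsc[OF assms]
  show "- log 2 (F_bsc \<rho> (capacity W Y)) \<le> E0 W Y \<rho>" "E0 W Y \<rho> \<le> - log 2 (F_bec \<rho> (capacity W Y))"
    unfolding E0_def by simp_all
qed

end

lemma bims_imp_binary_input_channel: "bims W Y \<Longrightarrow> binary_input_channel W Y"
  unfolding bims_def by unfold_locales auto

lemma binary_input_channel_bsc: "0 \<le> p \<Longrightarrow> p \<le> 1 \<Longrightarrow> binary_input_channel (bsc p) UNIV"
  by unfold_locales (auto simp: bsc_def UNIV_bool)

lemma binary_input_channel_bec: "0 \<le> e \<Longrightarrow> e \<le> 1 \<Longrightarrow> binary_input_channel (bec e) UNIV"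
  by unfold_locales (auto simp: bec_def UNIV_option_conv UNIV_bool split: option.split)


section \<open>The extreme channels\<close>

lemma Ffun_bsc:
  assumes "0 \<le> p" "p \<le> 1" "\<rho> > -1"
  shows "Ffun (bsc p) UNIV \<rho> = bsc_F \<rho> p"
proof -
  interpret binary_input_channel "bsc p" UNIV using assms(1,2) by (rule binary_input_channel_bsc)
  show ?thesis
    using bsc_F_one_minus[of \<rho> p]
    by (simp add: Ffun_eq[OF assms(3)] sum_UNIV_bool out_prob_bool posterior_def bsc_def)
qed

lemma capacity_bsc:
  assumes "0 \<le> p" "p \<le> 1"
  shows "capacity (bsc p) UNIV = 1 - bin_entropy p"
proof -
  interpret binary_input_channel "bsc p" UNIV using assms(1,2) by (rule binary_input_channel_bsc)
  show ?thesis
    using bin_entropy_one_minus[of p]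
    by (simp add: capacity_eq equivocation_def sum_UNIV_bool out_prob_bool posterior_def bsc_def)
qed

lemma Ffun_bsc_eq_F_bsc:
  assumes "0 \<le> p" "p \<le> 1" "\<rho> > -1"
  shows "Ffun (bsc p) UNIV \<rho> = F_bsc \<rho> (capacity (bsc p) UNIV)"
proof -
  define e where "e = min p (1 - p)"
  have e: "0 \<le> e" "e \<le> 1/2" unfolding e_def using assms by (auto simp: min_def)
  have "bin_entropy e = bin_entropy p" "bsc_F \<rho> e = bsc_F \<rho> p"
    unfolding e_def using bin_entropy_one_minus[of p] bsc_F_one_minus[of \<rho> p] by (simp_all add: min_def)
  thus ?thesis
    using bin_entropy_inv_bin_entropy[OF e]
    by (simp add: Ffun_bsc capacity_bsc assms F_bsc_eq_bsc_F)
qed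

lemma sum_UNIV_option_bool:
  "(\<Sum>y\<in>UNIV. f y) = f None + f (Some True) + f (Some False)"
proof -
  have "(\<Sum>y\<in>UNIV. f y) = f None + (\<Sum>b\<in>UNIV. f (Some b))"
    unfolding UNIV_option_conv by (simp add: sum.reindex)
  thus ?thesis by (simp add: sum_UNIV_bool add.assoc)
qed

lemma Ffun_bec:
  assumes "0 \<le> e" "e \<le> 1" "\<rho> > -1"
  shows "Ffun (bec e) UNIV \<rho> = e + (1 - e) * 2 powr (-\<rho>)"
proof -
  interpret binary_input_channel "bec e" UNIV using assms(1,2) by (rule binary_input_channel_bec)
  have erasure: "out_prob (bec e) None * bsc_F \<rho> (posterior (bec e) None) = e"
    by (cases "e = 0") (simp_all add: out_prob_bool posterior_def bec_def bsc_F_half[OF assms(3)])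
  have unerased: "out_prob (bec e) (Some b) * bsc_F \<rho> (posterior (bec e) (Some b))
      = (1 - e) / 2 * 2 powr (-\<rho>)" for b
    using bsc_F_one_minus[of \<rho> 0]
    by (cases "e = 1"; cases b) (simp_all add: out_prob_bool posterior_def bec_def)
  show ?thesis
    unfolding Ffun_eq[OF assms(3)] sum_UNIV_option_bool erasure unerased by (simp add: field_simps)
qed

lemma capacity_bec:
  assumes "0 \<le> e" "e \<le> 1"
  shows "capacity (bec e) UNIV = 1 - e"
proof -
  interpret binary_input_channel "bec e" UNIV using assms(1,2) by (rule binary_input_channel_bec)
  have "out_prob (bec e) None * bin_entropy (posterior (bec e) None) = e"
    by (cases "e = 0") (simp_all add: out_prob_bool posterior_def bec_def)
  moreover have "bin_entropy (posterior (bec e) (Some b)) = 0" for b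
    by (cases "e = 1"; cases b) (simp_all add: out_prob_bool posterior_def bec_def)
  ultimately show ?thesis
    by (simp add: capacity_eq equivocation_def sum_UNIV_option_bool)
qed

lemma Ffun_bec_eq_F_bec:
  assumes "0 \<le> e" "e \<le> 1" "\<rho> > -1"
  shows "Ffun (bec e) UNIV \<rho> = F_bec \<rho> (capacity (bec e) UNIV)"
  using assms by (simp add: Ffun_bec capacity_bec F_bec_def algebra_simps)


theorem mainTheorem6:
  fixes W :: "bool \<Rightarrow> 'y \<Rightarrow> real" and Y :: "'y set"
  assumes "bims W Y"
  shows "(\<forall>\<rho>::real. \<rho> > -1 \<longrightarrow>
            - log 2 (F_bsc \<rho> (capacity W Y)) \<le> E0 W Y \<rho> \<and>
            E0 W Y \<rho> \<le> - log 2 (F_bec \<rho> (capacity W Y)))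
       \<and> (let C = capacity W Y; \<epsilon> = bin_entropy_inv (1 - C) in
            - log 2 ((1/2) * (sqrt \<epsilon> + sqrt (1 - \<epsilon>))^2) \<le> E0 W Y 1 \<and>
            E0 W Y 1 \<le> - log 2 ((1 + (1 - C)) / 2))
       \<and> (\<forall>p::real. 0 \<le> p \<and> p \<le> 1 \<longrightarrow>
            (let C = capacity (bsc p) UNIV; \<epsilon> = bin_entropy_inv (1 - C) in
              E0 (bsc p) UNIV 1 = - log 2 ((1/2) * (sqrt \<epsilon> + sqrt (1 - \<epsilon>))^2)))
       \<and> (\<forall>e::real. 0 \<le> e \<and> e \<le> 1 \<longrightarrow>
            (let C = capacity (bec e) UNIV in
              E0 (bec e) UNIV 1 = - log 2 ((1 + (1 - C)) / 2)))"
proof -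
  interpret binary_input_channel W Y using assms by (rule bims_imp_binary_input_channel)
  have bsc: "E0 (bsc p) UNIV 1 = - log 2 (F_bsc 1 (capacity (bsc p) UNIV))"
    "0 \<le> capacity (bsc p) UNIV" "capacity (bsc p) UNIV \<le> 1" if "0 \<le> p" "p \<le> 1" for p
    using Ffun_bsc_eq_F_bsc[OF that] binary_input_channel.capacity_range[OF binary_input_channel_bsc[OF that]]
    by (simp_all add: E0_def)
  have bec: "E0 (bec e) UNIV 1 = - log 2 (F_bec 1 (capacity (bec e) UNIV))" if "0 \<le> e" "e \<le> 1" for e
    using Ffun_bec_eq_F_bec[OF that] by (simp add: E0_def)
  show ?thesis
    using E0_bounds E0_bounds[of 1] capacity_range bsc bec by (simp add: Let_def F_bsc_1 F_bec_1)
qed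

end
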